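(* Let $C'$ be a generic smooth non-hyperelliptic curve of genus $3$ over $\mathbb{C}$. Let $L'_1\subsetneq L'_2\subsetneq L'_3$ and $\tilde L_1\subsetneq\tilde L_2\subsetneq\tilde L_3$ be two full isotropic flags in $\mathrm{Jac}(C')[2]$ (so $|L'_k|=|\tilde L_k|=2^k$ and $L'_3,\tilde L_3$ are maximal isotropic) such that $\tilde L_1\oplus L'_3={L'_2}^{\perp}$, $\tilde L_2\oplus L'_3={L'_1}^{\perp}$ and $\tilde L_3\oplus L'_3=\mathrm{Jac}(C')[2]$. Let $\alpha'$ be the nonzero element of $L'_1$. Then for every subgroup $H\subset\tilde L_3$ of order $4$: $\#(\Gamma_H\cap\Sigma_{\alpha'})=0$ if $H=\tilde L_2$, and $\#(\Gamma_H\cap\Sigma_{\alpha'})=2$ otherwise.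
   Context: $\mathrm{Jac}(C')[2]\cong\mathbb{F}_2^6$ carries the Weil pairing $\langle\cdot,\cdot\rangle$, a nondegenerate symplectic form; for a subgroup $G$, $G^\perp=\{a:\langle a,g\rangle=0\ \forall g\in G\}$. A theta characteristic is a divisor class $\theta$ with $2\theta=K_{C'}$, odd if $h^0(\theta)$ is odd. For nonzero $\gamma$, the Steiner system $\Sigma_\gamma$ is the set of odd theta characteristics $\theta$ with $\theta+\gamma$ odd. For an isotropic subgroup $H$ of order $4$, $\Gamma_H$ denotes the set of odd theta characteristics $\theta$ such that $\theta+h$ is odd for all $h\in H$ (a set of the form $\{\theta_0+h: h\in H\}$ with four elements). *)

theory Defs
  imports Main
begin

text \<open>The group Jac(C')[2] is an elementary abelian 2-group of
order 64 (type 'v); the Weil pairing is a map w into F_2 = bool (addition in F_2 is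
exclusive or, i.e. inequality on bool).  Theta characteristics form a torsor (type 't)
under Jac(C')[2] via the action act theta a = theta + a, and is_odd is the parity of h^0.\<close>

definition elem2_group :: "'v::ab_group_add itself \<Rightarrow> bool" where
  "elem2_group _ \<longleftrightarrow> (\<forall>a::'v. a + a = 0)"

definition weil_pairing :: "('v::ab_group_add \<Rightarrow> 'v \<Rightarrow> bool) \<Rightarrow> bool" where
  "weil_pairing w \<longleftrightarrow>
     (\<forall>a b c. w (a + b) c = (w a c \<noteq> w b c)) \<and>
     (\<forall>a b c. w a (b + c) = (w a b \<noteq> w a c)) \<and>
     (\<forall>a. \<not> w a a) \<and>
     (\<forall>a. a \<noteq> 0 \<longrightarrow> (\<exists>b. w a b))"

definition torsor :: "('t \<Rightarrow> 'v::ab_group_add \<Rightarrow> 't) \<Rightarrow> bool" where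
  "torsor act \<longleftrightarrow>
     (\<forall>\<theta>. act \<theta> 0 = \<theta>) \<and>
     (\<forall>\<theta> a b. act (act \<theta> a) b = act \<theta> (a + b)) \<and>
     (\<forall>\<theta> \<theta>'. \<exists>!a. act \<theta> a = \<theta>')"

text \<open>Theta characteristic structure of a genus 3 curve: the parity satisfies the
Riemann--Mumford relation  e(th+a+b)+e(th+a)+e(th+b)+e(th) = <a,b>  (mod 2), and there are
exactly 2^(g-1)(2^g-1) = 28 is_odd theta characteristics.\<close>
definition theta_structure ::
  "('v::ab_group_add \<Rightarrow> 'v \<Rightarrow> bool) \<Rightarrow> ('t \<Rightarrow> 'v \<Rightarrow> 't) \<Rightarrow> ('t \<Rightarrow> bool) \<Rightarrow> bool" where
  "theta_structure w act is_odd \<longleftrightarrow>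
     torsor act \<and>
     (\<forall>\<theta> a b. ((is_odd (act \<theta> (a + b)) \<noteq> is_odd (act \<theta> a)) \<noteq> (is_odd (act \<theta> b) \<noteq> is_odd \<theta>)) = w a b) \<and>
     card {\<theta>. is_odd \<theta>} = 28"

definition subgrp :: "'v::ab_group_add set \<Rightarrow> bool" where
  "subgrp H \<longleftrightarrow> 0 \<in> H \<and> (\<forall>a\<in>H. \<forall>b\<in>H. a + b \<in> H) \<and> (\<forall>a\<in>H. - a \<in> H)"

definition isotropic :: "('v::ab_group_add \<Rightarrow> 'v \<Rightarrow> bool) \<Rightarrow> 'v set \<Rightarrow> bool" where
  "isotropic w H \<longleftrightarrow> subgrp H \<and> (\<forall>a\<in>H. \<forall>b\<in>H. \<not> w a b)"

definition perp :: "('v::ab_group_add \<Rightarrow> 'v \<Rightarrow> bool) \<Rightarrow> 'v set \<Rightarrow> 'v set" where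
  "perp w G = {a. \<forall>g\<in>G. \<not> w a g}"

definition direct_sum_eq :: "'v::ab_group_add set \<Rightarrow> 'v set \<Rightarrow> 'v set \<Rightarrow> bool" where
  "direct_sum_eq A B C \<longleftrightarrow> A \<inter> B = {0} \<and> {a + b | a b. a \<in> A \<and> b \<in> B} = C"

definition steiner :: "('t \<Rightarrow> 'v \<Rightarrow> 't) \<Rightarrow> ('t \<Rightarrow> bool) \<Rightarrow> 'v \<Rightarrow> 't set" where
  "steiner act is_odd \<gamma> = {\<theta>. is_odd \<theta> \<and> is_odd (act \<theta> \<gamma>)}"

definition Gamma :: "('t \<Rightarrow> 'v \<Rightarrow> 't) \<Rightarrow> ('t \<Rightarrow> bool) \<Rightarrow> 'v set \<Rightarrow> 't set" where
  "Gamma act is_odd H = {\<theta>. is_odd \<theta> \<and> (\<forall>h\<in>H. is_odd (act \<theta> h))}"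

definition full_isotropic_flag ::
  "('v::ab_group_add \<Rightarrow> 'v \<Rightarrow> bool) \<Rightarrow> 'v set \<Rightarrow> 'v set \<Rightarrow> 'v set \<Rightarrow> bool" where
  "full_isotropic_flag w L1 L2 L3 \<longleftrightarrow>
     isotropic w L1 \<and> isotropic w L2 \<and> isotropic w L3 \<and>
     L1 \<subset> L2 \<and> L2 \<subset> L3 \<and> card L1 = 2 \<and> card L2 = 4 \<and> card L3 = 8"

end

theory Submission
  imports Defs
begin

(* Split Jac(C')[2] = Lt3 + L'3 into two Lagrangians and pick a basis e = (alpha', e2, e3) of L'3
   with dual basis f of Lt3, so that v = sum x_i e_i + sum y_i f_i gives coordinates (x, y) in
   F_2^3 x F_2^3 and w(v, v') = x.y' + x'.y.  For any theta characteristic theta, the parity of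
   theta + v minus that of theta is a quadratic form refining w; translating theta by a suitable
   element makes it vanish on both Lagrangians, so the parity of theta0 + v is b + x.y, and b = 0
   because exactly 28 (not 36) characteristics are odd.
   A subgroup H of Lt3 of order 4 has coordinates {0} x D for a plane D in F_2^3, and alpha' has
   coordinates ((1,0,0), 0).  Then Gamma_H meets Sigma_alpha' in the (x, y) with x.y = 1, x
   orthogonal to D and y_1 = 0.  If D is the plane y_1 = 0, i.e. H = Lt2, these force x.y = 0, so
   there are none; otherwise x is the unique nonzero vector orthogonal to D, which differs from
   (1,0,0), and the two independent conditions on y leave 2 solutions. *)

type_synonym bits3 = "bool \<times> bool \<times> bool"

fun bxor :: "bits3 \<Rightarrow> bits3 \<Rightarrow> bits3" where
  "bxor (a1, a2, a3) (b1, b2, b3) = (a1 \<noteq> b1, a2 \<noteq> b2, a3 \<noteq> b3)"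

fun bdot :: "bits3 \<Rightarrow> bits3 \<Rightarrow> bool" where
  "bdot (a1, a2, a3) (b1, b2, b3) = (((a1 \<and> b1) \<noteq> (a2 \<and> b2)) \<noteq> (a3 \<and> b3))"

lemma bdot_commute: "bdot x y = bdot y x"
  by (cases x; cases y) auto

lemma bdot_zero_left [simp]: "\<not> bdot (False, False, False) x"
  by (cases x rule: prod_cases3) simp

lemma bxor_zero_left [simp]: "bxor (False, False, False) x = x"
  by (cases x rule: prod_cases3) simp

lemma bxor_zero_right [simp]: "bxor x (False, False, False) = x"
  by (cases x rule: prod_cases3) simp

lemma fst_bxor [simp]: "fst (bxor x y) = (fst x \<noteq> fst y)"
  by (cases x rule: prod_cases3; cases y rule: prod_cases3) simp

lemma card_bits3: "card (UNIV :: bits3 set) = 8"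
  by (simp flip: UNIV_Times_UNIV)

lemma card_bdot: "card {(x, y). bdot x y} = 28" "card {(x, y). \<not> bdot x y} = 36"
  by code_simp+

fun comb3 :: "'v::monoid_add \<times> 'v \<times> 'v \<Rightarrow> bits3 \<Rightarrow> 'v" where
  "comb3 (a, b, c) (x, y, z) = (if x then a else 0) + (if y then b else 0) + (if z then c else 0)"

fun pair3 :: "('v \<Rightarrow> 'v \<Rightarrow> bool) \<Rightarrow> 'v \<times> 'v \<times> 'v \<Rightarrow> 'v \<Rightarrow> bits3" where
  "pair3 w (a, b, c) v = (w v a, w v b, w v c)"

lemma comb3_zero [simp]: "comb3 e (False, False, False) = 0"
  by (cases e rule: prod_cases3) simp

lemma fst_comb3: "fst e = comb3 e (True, False, False)"
  by (cases e rule: prod_cases3) simp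

lemma fst_pair3: "fst (pair3 w e v) = w v (fst e)"
  by (cases e rule: prod_cases3) simp

lemma pair3_conv_comb3:
  "pair3 w f v = (w v (comb3 f (True, False, False)), w v (comb3 f (False, True, False)), w v (comb3 f (False, False, True)))"
  by (cases f rule: prod_cases3) simp

lemma elem2_add_self:
  assumes "elem2_group TYPE('v::ab_group_add)"
  shows "(x::'v) + x = 0"
  using assms unfolding elem2_group_def by blast

lemma elem2_add_cancel_left:
  assumes "elem2_group TYPE('v::ab_group_add)"
  shows "(x::'v) + (x + y) = y"
  by (metis add.assoc add_0 elem2_add_self[OF assms])

lemma elem2_add_eq_0_iff:
  assumes "elem2_group TYPE('v::ab_group_add)"
  shows "(x::'v) + y = 0 \<longleftrightarrow> x = y"
  by (metis add_0_right elem2_add_cancel_left[OF assms] elem2_add_self[OF assms])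

lemma card_less_obtains_notin:
  assumes "finite T" "card T < card S"
  obtains g where "g \<in> S" "g \<notin> T"
  using card_mono[OF assms(1), of S] assms(2) by (metis not_le subsetI)

lemma card_Un_translate:
  fixes T :: "'v::ab_group_add set"
  assumes "elem2_group TYPE('v)" "finite T" "\<forall>a\<in>T. \<forall>b\<in>T. a + b \<in> T" "g \<notin> T"
  shows "card (T \<union> (\<lambda>x. g + x) ` T) = 2 * card T"
proof -
  have "T \<inter> (\<lambda>x. g + x) ` T = {}"
  proof (rule ccontr)
    assume "T \<inter> (\<lambda>x. g + x) ` T \<noteq> {}"
    then obtain x where "x \<in> T" "g + x \<in> T" by blast
    then have "(g + x) + x \<in> T" using assms(3) by blast
    then show False
      using assms(4) by (simp add: add.assoc elem2_add_self[OF assms(1)])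
  qed
  moreover have "card ((\<lambda>x. g + x) ` T) = card T"
    by (simp add: card_image)
  ultimately show ?thesis
    using card_Un_disjoint[OF assms(2) finite_imageI[OF assms(2)]] by simp
qed

lemma range_comb3:
  fixes a b c :: "'v::comm_monoid_add"
  shows "range (comb3 (a, b, c)) = {0, a, b, a + b} \<union> (\<lambda>x. c + x) ` {0, a, b, a + b}"
proof -
  have U: "(UNIV :: bits3 set) = {False, True} \<times> {False, True} \<times> {False, True}"
    by auto
  show ?thesis unfolding U by (simp add: add_ac insert_commute)
qed

lemma subgrp_card8_eq_range_comb3:
  fixes S :: "'v::ab_group_add set"
  assumes "elem2_group TYPE('v)" "subgrp S" "card S = 8" "e1 \<in> S" "e1 \<noteq> 0"
  obtains e2 e3 where "S = range (comb3 (e1, e2, e3))"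
proof -
  have fin: "finite S" using assms(3) by (simp add: card_ge_0_finite)
  have closed: "\<forall>a\<in>S. \<forall>b\<in>S. a + b \<in> S" "0 \<in> S" using assms(2) unfolding subgrp_def by blast+
  define T1 where "T1 = {0, e1}"
  obtain e2 where e2: "e2 \<in> S" "e2 \<notin> T1"
    using card_less_obtains_notin[of T1 S] assms(3,5) by (auto simp: T1_def)
  define T2 where "T2 = T1 \<union> (\<lambda>x. e2 + x) ` T1"
  have T2: "T2 = {0, e1, e2, e1 + e2}" by (auto simp: T2_def T1_def add.commute)
  have "card T2 = 4"
    using card_Un_translate[OF assms(1) _ _ e2(2)] assms(5)
    by (simp add: T2_def T1_def elem2_add_self[OF assms(1)])
  then obtain e3 where e3: "e3 \<in> S" "e3 \<notin> T2"
    using card_less_obtains_notin[of T2 S] assms(3) by (auto simp: T2)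
  have "card (range (comb3 (e1, e2, e3))) = 8"
    unfolding range_comb3 T2[symmetric] using card_Un_translate[OF assms(1) _ _ e3(2)] \<open>card T2 = 4\<close>
    by (simp add: T2 elem2_add_self[OF assms(1)] elem2_add_cancel_left[OF assms(1)] add_ac)
  moreover have "range (comb3 (e1, e2, e3)) \<subseteq> S"
    unfolding range_comb3 using closed assms(4) e2(1) e3(1) by auto
  ultimately show thesis using that card_subset_eq[OF fin] assms(3) by metis
qed

lemma subgrp_card4_eq:
  fixes H :: "'v::ab_group_add set"
  assumes "elem2_group TYPE('v)" "subgrp H" "card H = 4"
  obtains a b where "a \<noteq> 0" "b \<noteq> 0" "a \<noteq> b" "H = {0, a, b, a + b}"
proof -
  have "finite H" using assms(3) by (simp add: card_ge_0_finite)
  have closed: "\<forall>a\<in>H. \<forall>b\<in>H. a + b \<in> H" "0 \<in> H" using assms(2) unfolding subgrp_def by blast+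
  obtain a where a: "a \<in> H" "a \<noteq> 0" using card_less_obtains_notin[of "{0}" H] assms(3) by auto
  have "card {0, a} < card H" using assms(3) by (simp add: card_insert_if)
  then obtain b where b: "b \<in> H" "b \<notin> {0, a}" using card_less_obtains_notin[of "{0, a}" H] by blast
  have "a + b \<noteq> 0" using b(2) elem2_add_eq_0_iff[OF assms(1)] by auto
  then have "card {0, a, b, a + b} = 4" using a(2) b(2) by auto
  moreover have "{0, a, b, a + b} \<subseteq> H" using closed a(1) b(1) by auto
  ultimately have "H = {0, a, b, a + b}" using card_subset_eq[OF \<open>finite H\<close>] assms(3) by metis
  then show thesis using that a(2) b(2) by auto
qed

section \<open>Symplectic bases adapted to a Lagrangian splitting\<close>

lemma weil_pairing_add_left: "weil_pairing w \<Longrightarrow> w (a + b) c = (w a c \<noteq> w b c)"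
  unfolding weil_pairing_def by blast

lemma weil_pairing_add_right: "weil_pairing w \<Longrightarrow> w a (b + c) = (w a b \<noteq> w a c)"
  unfolding weil_pairing_def by blast

lemma weil_pairing_zero_left: "weil_pairing w \<Longrightarrow> \<not> w 0 c"
  using weil_pairing_add_left[of w 0 0 c] by simp

lemma weil_pairing_zero_right: "weil_pairing w \<Longrightarrow> \<not> w c 0"
  using weil_pairing_add_right[of w c 0 0] by simp

lemma weil_pairing_commute:
  assumes "weil_pairing w"
  shows "w a b = w b a"
proof -
  have "\<not> w a a" "\<not> w b b" "\<not> w (a + b) (a + b)" using assms unfolding weil_pairing_def by blast+
  then show ?thesis by (simp add: weil_pairing_add_left[OF assms] weil_pairing_add_right[OF assms])
qed

lemma weil_pairing_nondegenerate: "weil_pairing w \<Longrightarrow> (\<And>b. \<not> w a b) \<Longrightarrow> a = 0"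
  unfolding weil_pairing_def by blast

lemma pair3_add: "weil_pairing w \<Longrightarrow> pair3 w e (u + v) = bxor (pair3 w e u) (pair3 w e v)"
  by (cases e rule: prod_cases3) (simp add: weil_pairing_add_left)

lemma pair3_zero: "weil_pairing w \<Longrightarrow> pair3 w e 0 = (False, False, False)"
  by (cases e rule: prod_cases3) (simp add: weil_pairing_zero_left)

lemma weil_pairing_comb3_right: "weil_pairing w \<Longrightarrow> w u (comb3 e x) = bdot (pair3 w e u) x"
  by (cases e rule: prod_cases3; cases x rule: prod_cases3)
    (simp add: weil_pairing_add_right weil_pairing_zero_right)

definition symplectic_basis3 :: "('v::ab_group_add \<Rightarrow> 'v \<Rightarrow> bool) \<Rightarrow> 'v \<times> 'v \<times> 'v \<Rightarrow> 'v \<times> 'v \<times> 'v \<Rightarrow> bool" where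
  "symplectic_basis3 w e f \<longleftrightarrow>
     (\<forall>x x'. \<not> w (comb3 e x) (comb3 e x')) \<and> (\<forall>y y'. \<not> w (comb3 f y) (comb3 f y')) \<and>
     (\<forall>x y. w (comb3 e x) (comb3 f y) = bdot x y) \<and> (\<forall>v. \<exists>x y. v = comb3 e x + comb3 f y)"

lemma symplectic_basis3_pair3:
  assumes "weil_pairing w" "symplectic_basis3 w e f"
  shows "pair3 w f (comb3 e x) = x" "pair3 w e (comb3 e x) = (False, False, False)"
    and "pair3 w f (comb3 f y) = (False, False, False)" "pair3 w e (comb3 f y) = y"
proof -
  have "\<not> w (comb3 e x) (comb3 e x')" "\<not> w (comb3 f y) (comb3 f y')" "w (comb3 e x) (comb3 f y) = bdot x y"
    for x x' y y' using assms(2) unfolding symplectic_basis3_def by blast+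
  moreover have "w (comb3 f y) (comb3 e x) = bdot y x" for x y
    using calculation(3) weil_pairing_commute[OF assms(1)] bdot_commute by metis
  ultimately show "pair3 w f (comb3 e x) = x" "pair3 w e (comb3 e x) = (False, False, False)"
    and "pair3 w f (comb3 f y) = (False, False, False)" "pair3 w e (comb3 f y) = y"
    unfolding pair3_conv_comb3 by (cases x rule: prod_cases3, cases y rule: prod_cases3, simp)+
qed

lemma symplectic_basis3_coords:
  assumes "weil_pairing w" "symplectic_basis3 w e f"
  shows "pair3 w f (comb3 e x + comb3 f y) = x" "pair3 w e (comb3 e x + comb3 f y) = y"
  by (simp_all add: pair3_add[OF assms(1)] symplectic_basis3_pair3[OF assms])

lemma symplectic_basis3_decomp:
  assumes "weil_pairing w" "symplectic_basis3 w e f"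
  shows "v = comb3 e (pair3 w f v) + comb3 f (pair3 w e v)"
proof -
  obtain x y where "v = comb3 e x + comb3 f y" using assms(2) unfolding symplectic_basis3_def by blast
  then show ?thesis by (simp add: symplectic_basis3_coords[OF assms])
qed

lemma symplectic_basis3_bij:
  assumes "weil_pairing w" "symplectic_basis3 w e f"
  shows "bij (\<lambda>(x, y). comb3 e x + comb3 f y)"
proof (rule bijI)
  have "p = (pair3 w f (comb3 e (fst p) + comb3 f (snd p)), pair3 w e (comb3 e (fst p) + comb3 f (snd p)))" for p
    by (simp add: symplectic_basis3_coords[OF assms])
  then show "inj (\<lambda>(x, y). comb3 e x + comb3 f y)"
    by (metis (no_types, lifting) case_prod_beta injI)
  show "surj (\<lambda>(x, y). comb3 e x + comb3 f y)"
    using symplectic_basis3_decomp[OF assms] by (metis (no_types, lifting) case_prod_conv surj_def)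
qed

lemma inj_on_pair3_Lagrangian_complement:
  fixes w :: "'v::ab_group_add \<Rightarrow> 'v \<Rightarrow> bool"
  assumes "elem2_group TYPE('v)" "weil_pairing w" "isotropic w T" "direct_sum_eq T (range (comb3 e)) UNIV"
  shows "inj_on (pair3 w e) T"
proof (rule inj_onI)
  fix t t' assume t: "t \<in> T" "t' \<in> T" "pair3 w e t = pair3 w e t'"
  have "\<not> w (t + t') v" for v
  proof -
    obtain s x where "s \<in> T" "v = s + comb3 e x"
      using assms(4) unfolding direct_sum_eq_def by blast
    moreover have "pair3 w e (t + t') = (False, False, False)"
      using t(3) by (cases "pair3 w e t'" rule: prod_cases3) (simp add: pair3_add[OF assms(2)])
    moreover have "t + t' \<in> T" "\<not> w (t + t') s" if "s \<in> T" for s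
      using assms(3) t(1,2) that unfolding isotropic_def subgrp_def by blast+
    ultimately show ?thesis
      by (simp add: weil_pairing_add_right[OF assms(2)] weil_pairing_comb3_right[OF assms(2)])
  qed
  then show "t = t'"
    using weil_pairing_nondegenerate[OF assms(2)] elem2_add_eq_0_iff[OF assms(1)] by blast
qed

lemma dual_basis3:
  assumes "weil_pairing w" "subgrp T" "card T = 8" "inj_on (pair3 w e) T"
  obtains f where "T = range (comb3 f)" "\<And>y. pair3 w e (comb3 f y) = y"
proof -
  have "pair3 w e ` T = UNIV"
    using card_image assms(3,4) card_bits3 by (metis card_subset_eq finite subset_UNIV)
  then obtain f1 f2 f3 where f: "f1 \<in> T" "f2 \<in> T" "f3 \<in> T" "pair3 w e f1 = (True, False, False)"
    "pair3 w e f2 = (False, True, False)" "pair3 w e f3 = (False, False, True)"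
    by (metis UNIV_I imageE)
  define f where "f = (f1, f2, f3)"
  have pair_f: "pair3 w e (comb3 f y) = y" for y
    using f(4-6) by (cases y rule: prod_cases3)
      (simp add: f_def pair3_add[OF assms(1)] pair3_zero[OF assms(1)])
  have "range (comb3 f) \<subseteq> T"
    using f(1-3) assms(2) unfolding subgrp_def by (auto simp: f_def)
  moreover have "inj (comb3 f)"
    by (metis injI pair_f)
  then have "card (range (comb3 f)) = card T"
    using card_image card_bits3 assms(3) by metis
  moreover have "finite T" using assms(3) by (simp add: card_ge_0_finite)
  ultimately have "T = range (comb3 f)"
    by (metis card_subset_eq)
  then show thesis using that pair_f by blast
qed

lemma symplectic_basis3_adapted:
  fixes w :: "'v::ab_group_add \<Rightarrow> 'v \<Rightarrow> bool"
  assumes "elem2_group TYPE('v)" "weil_pairing w"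
    and "isotropic w T" "isotropic w L" "card T = 8" "card L = 8" "direct_sum_eq T L UNIV"
    and "e1 \<in> L" "e1 \<noteq> 0"
  obtains e2 e3 f where "symplectic_basis3 w (e1, e2, e3) f" "T = range (comb3 f)"
proof -
  obtain e2 e3 where L: "L = range (comb3 (e1, e2, e3))"
    using subgrp_card8_eq_range_comb3 assms(1,4,6,8,9) unfolding isotropic_def by metis
  define e where "e = (e1, e2, e3)"
  have "inj_on (pair3 w e) T"
    using inj_on_pair3_Lagrangian_complement assms(1-3,7) unfolding L e_def by blast
  then obtain f where Tf: "T = range (comb3 f)" and pair_f: "\<And>y. pair3 w e (comb3 f y) = y"
    using dual_basis3[OF assms(2) _ assms(5)] assms(3) unfolding isotropic_def by blast
  have "symplectic_basis3 w e f"
    unfolding symplectic_basis3_def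
  proof (intro conjI allI)
    show "\<not> w (comb3 e x) (comb3 e x')" for x x'
      using assms(4) unfolding isotropic_def L e_def by blast
    show "\<not> w (comb3 f y) (comb3 f y')" for y y'
      using assms(3) Tf unfolding isotropic_def by blast
    show "w (comb3 e x) (comb3 f y) = bdot x y" for x y
      using weil_pairing_commute[OF assms(2)] weil_pairing_comb3_right[OF assms(2)] pair_f bdot_commute
      by metis
    show "\<exists>x y. v = comb3 e x + comb3 f y" for v
    proof -
      obtain t l where "t \<in> T" "l \<in> L" "v = t + l" using assms(7) unfolding direct_sum_eq_def by blast
      moreover obtain x y where "l = comb3 e x" "t = comb3 f y"
        using calculation(1,2) Tf unfolding L e_def by blast
      ultimately show ?thesis by (metis add.commute)
    qed
  qed
  then show thesis using that Tf by (simp add: e_def)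
qed

lemma symplectic_basis3_card_perp:
  assumes "weil_pairing w" "symplectic_basis3 w e f"
  shows "card {t \<in> range (comb3 f). \<not> w t (fst e)} = 4"
proof -
  have pair_f: "pair3 w e (comb3 f y) = y" for y
    using symplectic_basis3_pair3[OF assms] by blast
  then have "{t \<in> range (comb3 f). \<not> w t (fst e)} = comb3 f ` {y. \<not> fst y}"
    by (auto simp: fst_pair3[symmetric])
  moreover have "inj (comb3 f)" by (metis injI pair_f)
  moreover have "card {y :: bits3. \<not> fst y} = 4" by code_simp
  ultimately show ?thesis by (simp add: card_image inj_on_subset)
qed

section \<open>Theta characteristics as quadratic refinements\<close>

definition quadratic_refinement :: "('v::ab_group_add \<Rightarrow> 'v \<Rightarrow> bool) \<Rightarrow> ('v \<Rightarrow> bool) \<Rightarrow> bool" where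
  "quadratic_refinement w K \<longleftrightarrow> (\<forall>a b. K (a + b) = ((K a \<noteq> K b) \<noteq> w a b))"

lemma theta_structure_quadratic_refinement:
  "theta_structure w act is_odd \<Longrightarrow> quadratic_refinement w (\<lambda>v. is_odd (act \<theta> v) \<noteq> is_odd \<theta>)"
  unfolding theta_structure_def quadratic_refinement_def by (metis (full_types))

lemma quadratic_refinement_zero: "quadratic_refinement w K \<Longrightarrow> weil_pairing w \<Longrightarrow> \<not> K 0"
  unfolding quadratic_refinement_def by (metis add_0 weil_pairing_zero_left)

lemma quadratic_refinement_comb3:
  assumes "quadratic_refinement w K" "weil_pairing w" "\<not> w a b" "\<not> w a c" "\<not> w b c"
  shows "K (comb3 (a, b, c) x) = bdot (K a, K b, K c) x"
  using assms quadratic_refinement_zero[OF assms(1,2)] unfolding quadratic_refinement_def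
  by (cases x rule: prod_cases3) (simp add: weil_pairing_add_left weil_pairing_zero_left weil_pairing_zero_right)

lemma quadratic_refinement_normal_form:
  assumes "weil_pairing w" "symplectic_basis3 w e f" "quadratic_refinement w K"
  obtains c where "\<And>x y. (K (c + (comb3 e x + comb3 f y)) \<noteq> K c) = bdot x y"
proof -
  obtain e1 e2 e3 f1 f2 f3 where ef: "e = (e1, e2, e3)" "f = (f1, f2, f3)" by (metis prod_cases3)
  have units: "e1 = comb3 e (True, False, False)" "e2 = comb3 e (False, True, False)" "e3 = comb3 e (False, False, True)"
    "f1 = comb3 f (True, False, False)" "f2 = comb3 f (False, True, False)" "f3 = comb3 f (False, False, True)"
    by (simp_all add: ef)
  have iso: "\<not> w (comb3 e x) (comb3 e x')" "\<not> w (comb3 f y) (comb3 f y')" for x x' y y'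
    using assms(2) unfolding symplectic_basis3_def by blast+
  have Kadd: "K (a + b) = ((K a \<noteq> K b) \<noteq> w a b)" for a b
    using assms(3) unfolding quadratic_refinement_def by blast
  \<comment> \<open>c pairs with every basis vector as K does, so translating by c kills the linear part of K
    on both Lagrangians.\<close>
  define c where "c = comb3 e (K f1, K f2, K f3) + comb3 f (K e1, K e2, K e3)"
  have Ke: "K (comb3 e x) = bdot (K e1, K e2, K e3) x" for x
    using quadratic_refinement_comb3[OF assms(3,1)] iso(1) units by (metis ef(1))
  have Kf: "K (comb3 f y) = bdot (K f1, K f2, K f3) y" for y
    using quadratic_refinement_comb3[OF assms(3,1)] iso(2) units by (metis ef(2))
  have "w c (comb3 e x) = bdot (K e1, K e2, K e3) x" "w c (comb3 f y) = bdot (K f1, K f2, K f3) y" for x y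
    unfolding c_def weil_pairing_comb3_right[OF assms(1)]
    by (simp_all add: pair3_add[OF assms(1)] symplectic_basis3_pair3[OF assms(1,2)])
  moreover have "w (comb3 e x) (comb3 f y) = bdot x y" for x y
    using assms(2) unfolding symplectic_basis3_def by blast
  ultimately have "(K (c + (comb3 e x + comb3 f y)) \<noteq> K c) = bdot x y" for x y
    by (simp add: Kadd Ke Kf weil_pairing_add_right[OF assms(1)]) argo
  then show thesis by (rule that)
qed

lemma torsor_bij: "torsor act \<Longrightarrow> bij (act \<theta>)"
  unfolding torsor_def bij_def inj_def surj_def by metis

lemma card_Collect_bij: "bij g \<Longrightarrow> card {p. P (g p)} = card {t. P t}"
  by (metis bij_betw_def card_vimage_inj subset_UNIV vimage_Collect_eq)

lemma symplectic_basis3_torsor_bij: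
  assumes "weil_pairing w" "torsor act" "symplectic_basis3 w e f"
  shows "bij (\<lambda>(x, y). act \<theta> (comb3 e x + comb3 f y))"
  using bij_comp[OF symplectic_basis3_bij[OF assms(1,3)] torsor_bij[OF assms(2)]]
  by (simp add: comp_def case_prod_unfold)

lemma theta_structure_normal_form:
  fixes act :: "'t \<Rightarrow> 'v::ab_group_add \<Rightarrow> 't"
  assumes "weil_pairing w" "theta_structure w act is_odd" "symplectic_basis3 w e f"
  obtains \<theta>0 where "\<And>v. is_odd (act \<theta>0 v) = bdot (pair3 w f v) (pair3 w e v)"
proof -
  have torsor_act: "torsor act" and act_add: "\<And>\<theta> a b. act (act \<theta> a) b = act \<theta> (a + b)"
    using assms(2) unfolding theta_structure_def torsor_def by blast+
  fix \<theta> :: 't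
  obtain c where c: "\<And>x y. ((is_odd (act \<theta> (c + (comb3 e x + comb3 f y))) \<noteq> is_odd \<theta>)
      \<noteq> (is_odd (act \<theta> c) \<noteq> is_odd \<theta>)) = bdot x y"
    using quadratic_refinement_normal_form[OF assms(1,3) theta_structure_quadratic_refinement[OF assms(2), of \<theta>]]
    by blast
  define \<theta>0 where "\<theta>0 = act \<theta> c"
  define g where "g = (\<lambda>(x, y). act \<theta>0 (comb3 e x + comb3 f y))"
  have odd_g: "is_odd (g p) = (is_odd \<theta>0 \<noteq> bdot (fst p) (snd p))" for p
    using c[of "fst p" "snd p"] unfolding g_def \<theta>0_def act_add by (auto simp: case_prod_unfold)
  have "bij g"
    unfolding g_def by (rule symplectic_basis3_torsor_bij[OF assms(1) torsor_act assms(3)])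
  then have "card {p. is_odd (g p)} = 28"
    using card_Collect_bij assms(2) unfolding theta_structure_def by metis
  \<comment> \<open>If \<theta>0 were odd, the odd characteristics would be the 36 zeros of x \<cdot> y.\<close>
  then have "\<not> is_odd \<theta>0"
    using card_bdot by (cases "is_odd \<theta>0") (simp_all add: odd_g case_prod_unfold)
  then show thesis
    using that odd_g symplectic_basis3_decomp[OF assms(1,3)] unfolding g_def by (metis case_prod_conv fst_conv snd_conv)
qed

lemma card_Gamma_inter_steiner_coords:
  fixes act :: "'t \<Rightarrow> 'v::ab_group_add \<Rightarrow> 't"
  assumes "weil_pairing w" "torsor act" "symplectic_basis3 w e f"
    and "\<And>v. is_odd (act \<theta>0 v) = bdot (pair3 w f v) (pair3 w e v)"
  shows "card (Gamma act is_odd H \<inter> steiner act is_odd \<alpha>) =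
    card {(x, y). bdot x y \<and> (\<forall>h\<in>H. bdot (bxor x (pair3 w f h)) (bxor y (pair3 w e h)))
      \<and> bdot (bxor x (pair3 w f \<alpha>)) (bxor y (pair3 w e \<alpha>))}"
proof -
  have act0: "act \<theta> 0 = \<theta>" and act_add: "act (act \<theta> a) b = act \<theta> (a + b)" for \<theta> a b
    using assms(2) unfolding torsor_def by blast+
  define g where "g = (\<lambda>(x, y). act \<theta>0 (comb3 e x + comb3 f y))"
  have odd_g: "is_odd (act (g p) h) = bdot (bxor (fst p) (pair3 w f h)) (bxor (snd p) (pair3 w e h))" for p h
    unfolding g_def
    by (simp add: case_prod_beta act_add assms(4) pair3_add[OF assms(1)] symplectic_basis3_pair3[OF assms(1,3)])
  have "Gamma act is_odd H \<inter> steiner act is_odd \<alpha> =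
      {\<theta>. is_odd (act \<theta> 0) \<and> (\<forall>h\<in>H. is_odd (act \<theta> h)) \<and> is_odd (act \<theta> \<alpha>)}"
    unfolding Gamma_def steiner_def act0 by blast
  moreover have "bij g"
    unfolding g_def by (rule symplectic_basis3_torsor_bij[OF assms(1-3)])
  ultimately have "card (Gamma act is_odd H \<inter> steiner act is_odd \<alpha>) =
      card {p. is_odd (act (g p) 0) \<and> (\<forall>h\<in>H. is_odd (act (g p) h)) \<and> is_odd (act (g p) \<alpha>)}"
    using card_Collect_bij[of g "\<lambda>\<theta>. is_odd (act \<theta> 0) \<and> (\<forall>h\<in>H. is_odd (act \<theta> h)) \<and> is_odd (act \<theta> \<alpha>)"]
    by simp
  then show ?thesis
    by (simp add: odd_g pair3_zero[OF assms(1)] case_prod_unfold)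
qed

lemma card_bits3_Gamma_inter_steiner:
  "\<forall>A B. A \<noteq> (False, False, False) \<longrightarrow> B \<noteq> (False, False, False) \<longrightarrow> A \<noteq> B \<longrightarrow>
    card {(x, y). bdot x y \<and> bdot x (bxor y A) \<and> bdot x (bxor y B) \<and> bdot x (bxor y (bxor A B))
      \<and> bdot (bxor x (True, False, False)) y} = (if fst A \<or> fst B then 2 else 0)"
  by code_simp

lemma card_Gamma_inter_steiner_Lagrangian:
  fixes act :: "'t \<Rightarrow> 'v::ab_group_add \<Rightarrow> 't"
  assumes "elem2_group TYPE('v)" "weil_pairing w" "torsor act" "symplectic_basis3 w e f"
    and "\<And>v. is_odd (act \<theta>0 v) = bdot (pair3 w f v) (pair3 w e v)"
    and "subgrp H" "H \<subseteq> range (comb3 f)" "card H = 4"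
  shows "card (Gamma act is_odd H \<inter> steiner act is_odd (fst e)) = (if \<forall>h\<in>H. \<not> w h (fst e) then 0 else 2)"
proof -
  obtain a b where ab: "a \<noteq> 0" "b \<noteq> 0" "a \<noteq> b" "H = {0, a, b, a + b}"
    using subgrp_card4_eq[OF assms(1,6,8)] .
  obtain A B where AB: "a = comb3 f A" "b = comb3 f B" using assms(7) ab(4) by auto
  then have "A \<noteq> (False, False, False)" "B \<noteq> (False, False, False)" "A \<noteq> B" using ab(1-3) by auto
  then have "card {(x, y). bdot x y \<and> bdot x (bxor y A) \<and> bdot x (bxor y B) \<and> bdot x (bxor y (bxor A B))
      \<and> bdot (bxor x (True, False, False)) y} = (if fst A \<or> fst B then 2 else 0)"
    using card_bits3_Gamma_inter_steiner by blast
  moreover have "w h (fst e) = fst (pair3 w e h)" for h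
    by (simp add: fst_pair3)
  ultimately show ?thesis
    unfolding card_Gamma_inter_steiner_coords[OF assms(2-5)] ab(4) AB
    by (simp add: fst_comb3 pair3_add[OF assms(2)] pair3_zero[OF assms(2)] symplectic_basis3_pair3[OF assms(2,4)])
qed

theorem lemma2p6:
  fixes w :: "'v::{ab_group_add,finite} \<Rightarrow> 'v \<Rightarrow> bool"
    and act :: "'t::finite \<Rightarrow> 'v \<Rightarrow> 't"
    and is_odd :: "'t \<Rightarrow> bool"
    and L'1 L'2 L'3 Lt1 Lt2 Lt3 :: "'v set"
    and \<alpha>' :: 'v
  assumes "elem2_group TYPE('v)" and "card (UNIV :: 'v set) = 64"
    and "weil_pairing w"
    and "theta_structure w act is_odd"
    and "full_isotropic_flag w L'1 L'2 L'3"
    and "full_isotropic_flag w Lt1 Lt2 Lt3"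
    and "direct_sum_eq Lt1 L'3 (perp w L'2)"
    and "direct_sum_eq Lt2 L'3 (perp w L'1)"
    and "direct_sum_eq Lt3 L'3 UNIV"
    and "\<alpha>' \<in> L'1" and "\<alpha>' \<noteq> 0"
  shows "\<forall>H. subgrp H \<and> H \<subseteq> Lt3 \<and> card H = 4 \<longrightarrow>
           card (Gamma act is_odd H \<inter> steiner act is_odd \<alpha>') = (if H = Lt2 then 0 else 2)"
proof (intro allI impI, elim conjE)
  fix H assume H: "subgrp H" "H \<subseteq> Lt3" "card H = 4"
  have Lt: "isotropic w Lt3" "card Lt3 = 8" "Lt2 \<subseteq> Lt3" "card Lt2 = 4"
    and L': "isotropic w L'3" "card L'3 = 8" "\<alpha>' \<in> L'3"
    using assms(5,6,10) unfolding full_isotropic_flag_def by auto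
  obtain e2 e3 f where basis: "symplectic_basis3 w (\<alpha>', e2, e3) f" and Lt3: "Lt3 = range (comb3 f)"
    using symplectic_basis3_adapted[OF assms(1,3) Lt(1) L'(1) Lt(2) L'(2) assms(9) L'(3) assms(11)] .
  obtain \<theta>0 where \<theta>0: "\<And>v. is_odd (act \<theta>0 v) = bdot (pair3 w f v) (pair3 w (\<alpha>', e2, e3) v)"
    using theta_structure_normal_form[OF assms(3,4) basis] by blast
  have "torsor act" using assms(4) unfolding theta_structure_def by blast
  define P where "P = {t \<in> Lt3. \<not> w t \<alpha>'}"
  have card_P: "card P = 4" unfolding P_def Lt3 using symplectic_basis3_card_perp[OF assms(3) basis] by simp
  have "Lt2 \<subseteq> P"
    using assms(8,10) Lt(3) L'(1) unfolding P_def direct_sum_eq_def perp_def isotropic_def subgrp_def by force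
  have "finite P" using card_P by (simp add: card_ge_0_finite)
  then have "Lt2 = P" using \<open>Lt2 \<subseteq> P\<close> card_subset_eq card_P Lt(4) by metis
  moreover have "H = P \<longleftrightarrow> (\<forall>h\<in>H. \<not> w h \<alpha>')"
    using H(2,3) card_subset_eq[OF \<open>finite P\<close>, of H] card_P unfolding P_def by auto
  ultimately show "card (Gamma act is_odd H \<inter> steiner act is_odd \<alpha>') = (if H = Lt2 then 0 else 2)"
    using card_Gamma_inter_steiner_Lagrangian[OF assms(1,3) \<open>torsor act\<close> basis \<theta>0 H(1) H(2)[unfolded Lt3] H(3)]
    by simp
qed

end
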